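(* Let $m\in\mathbb{Z}^{+}$, let $\alpha_0,\dots,\alpha_m\in(0,1]$ with $\varrho_m=\sum_{j=0}^{m}\alpha_j-1$ satisfying $0<\varrho_m\le m$, and let $y\in\Omega^{\varrho_m}_{-1}$. Then, in the field $M_{-1}$ of convolution quotients, the Dzherbashian–Nersesian operator admits the representation $$(\mathcal{D}^{\varrho_m}_{t,0+}y)(x)=S_{\varrho_m}\circ y(x)-\sum_{k=0}^{m-1}S_{\varrho_m-\varrho_{m-k}-1}\circ\big(\mathcal{D}^{\varrho_k}_{t,0+}y\big)(x)\Big|_{x=0},\qquad x>0,$$ where $(\mathcal{D}^{\varrho_k}_{t,0+}y)(x)|_{x=0}:=\lim_{x\to0+}(\mathcal{D}^{\varrho_k}_{t,0+}y)(x)$ is a constant, multiplying the corresponding element of $M_{-1}$ as a scalar.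
   Context: Riemann–Liouville integral: for $\alpha>0$, $J^{\alpha}_{t,0+}g(t)=\frac{1}{\Gamma(\alpha)}\int_0^t (t-\tau)^{\alpha-1}g(\tau)\,d\tau$, $t>0$; $J^0$ is the identity. Riemann–Liouville derivative of order $\alpha\in(0,1]$: $D^{\alpha}_{t,0+}g=\frac{d}{dt}J^{1-\alpha}_{t,0+}g$. For $\alpha_0,\dots,\alpha_m\in(0,1]$ and $k=0,\dots,m$ set $\varrho_k=\sum_{j=0}^{k}\alpha_j-1$ and define the Dzherbashian–Nersesian operators $\mathcal{D}^{\varrho_0}_{t,0+}g=J^{1-\alpha_0}_{t,0+}g$ and, for $k\ge1$, $\mathcal{D}^{\varrho_k}_{t,0+}g=J^{1-\alpha_k}_{t,0+}D^{\alpha_{k-1}}_{t,0+}\cdots D^{\alpha_1}_{t,0+}D^{\alpha_0}_{t,0+}g$. Spaces: for $\gamma\in\mathbb{R}$, $C_\gamma$ is the set of functions $g$ on $(0,\infty)$ of the form $g(t)=t^{p}g_1(t)$ with some $p>\gamma$ and $g_1\in C[0,\infty)$. $\Omega^{\varrho_m}_{-1}$ denotes the class of functions $y$ for which the operators $\mathcal{D}^{\varrho_k}_{t,0+}y$ ($k=0,\dots,m$) exist and belong to $C_{-1}$. Convolution quotients: with Laplace convolution $(g*f)(t)=\int_0^t g(t-s)f(s)\,ds$, $(C_{-1},*,+)$ is a commutative ring without zero divisors; $M_{-1}$ is its field of quotients $f/g$ ($(f,g)\sim(f_1,g_1)$ iff $f*g_1=g*f_1$), with $\frac fg+\frac{f_1}{g_1}=\frac{f*g_1+g*f_1}{g*g_1}$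 and $\frac fg\circ\frac{f_1}{g_1}=\frac{f*f_1}{g*g_1}$; $C_{-1}$ is embedded via $f\mapsto (h_\alpha*f)/h_\alpha$, where $h_\alpha(t)=t^{\alpha-1}/\Gamma(\alpha)$, $\alpha>0$. The identity is $I=h_\alpha/h_\alpha$. For $\alpha>0$, $S_\alpha:=I/h_\alpha$ (the algebraic inverse of $J^\alpha_{t,0+}$, so $J^{\alpha}_{t,0+}y=\frac{1}{S_\alpha}\circ y$); $S_0:=I$ and $S_{-\beta}:=h_\beta$ for $\beta>0$, so that $S_a\circ S_b=S_{a+b}$. Scalars multiply quotients by $\lambda\frac fg=\frac{\lambda f}{g}$. *)

theory Defs
  imports "HOL-Analysis.Analysis"
begin

definition hk :: "real \<Rightarrow> real \<Rightarrow> real" where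
  "hk a t = t powr (a - 1) / Gamma a"

definition RLint :: "real \<Rightarrow> (real \<Rightarrow> real) \<Rightarrow> real \<Rightarrow> real" where
  "RLint a g t = (if a = 0 then g t
     else (1 / Gamma a) * integral {0..t} (\<lambda>\<tau>. (t - \<tau>) powr (a - 1) * g \<tau>))"

definition RLder :: "real \<Rightarrow> (real \<Rightarrow> real) \<Rightarrow> real \<Rightarrow> real" where
  "RLder a g t = deriv (RLint (1 - a) g) t"

fun Dchain :: "(nat \<Rightarrow> real) \<Rightarrow> nat \<Rightarrow> (real \<Rightarrow> real) \<Rightarrow> real \<Rightarrow> real" where
  "Dchain al 0 y = y"
| "Dchain al (Suc k) y = RLder (al k) (Dchain al k y)"

definition DN :: "(nat \<Rightarrow> real) \<Rightarrow> nat \<Rightarrow> (real \<Rightarrow> real) \<Rightarrow> real \<Rightarrow> real" where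
  "DN al k y = RLint (1 - al k) (Dchain al k y)"

definition rho :: "(nat \<Rightarrow> real) \<Rightarrow> nat \<Rightarrow> real" where
  "rho al k = (\<Sum>j\<le>k. al j) - 1"

definition Cgam :: "real \<Rightarrow> (real \<Rightarrow> real) set" where
  "Cgam \<gamma> = {g. \<exists>p > \<gamma>. \<exists>g1. continuous_on {0..} g1 \<and> (\<forall>t>0. g t = t powr p * g1 t)}"

definition Omega :: "(nat \<Rightarrow> real) \<Rightarrow> nat \<Rightarrow> (real \<Rightarrow> real) set" where
  "Omega al m = {y. y \<in> Cgam (-1) \<and>
     (\<forall>k\<le>m. DN al k y \<in> Cgam (-1) \<and>
        (al k < 1 \<longrightarrow> (\<forall>t>0. (\<lambda>\<tau>. (t - \<tau>) powr (- al k) * Dchain al k y \<tau>) integrable_on {0..t}))) \<and>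
     (\<forall>k<m. (\<forall>t>0. DN al k y differentiable (at t)) \<and> Dchain al (Suc k) y \<in> Cgam (-1))}"

definition conv :: "(real \<Rightarrow> real) \<Rightarrow> (real \<Rightarrow> real) \<Rightarrow> real \<Rightarrow> real" where
  "conv f g t = integral {0..t} (\<lambda>s. f (t - s) * g s)"

text \<open>Convolution quotients f/g represented by pairs (f,g); equality in M_{-1}
  is the equivalence f * g1 = g * f1 (as functions on (0,inf)).\<close>
type_synonym cquot = "(real \<Rightarrow> real) \<times> (real \<Rightarrow> real)"

definition qeq :: "cquot \<Rightarrow> cquot \<Rightarrow> bool" where
  "qeq p q = (\<forall>t>0. conv (fst p) (snd q) t = conv (snd p) (fst q) t)"

definition qadd :: "cquot \<Rightarrow> cquot \<Rightarrow> cquot" where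
  "qadd p q = ((\<lambda>t. conv (fst p) (snd q) t + conv (snd p) (fst q) t), conv (snd p) (snd q))"

definition qsub :: "cquot \<Rightarrow> cquot \<Rightarrow> cquot" where
  "qsub p q = ((\<lambda>t. conv (fst p) (snd q) t - conv (snd p) (fst q) t), conv (snd p) (snd q))"

definition qmult :: "cquot \<Rightarrow> cquot \<Rightarrow> cquot" where
  "qmult p q = (conv (fst p) (fst q), conv (snd p) (snd q))"

definition qscale :: "real \<Rightarrow> cquot \<Rightarrow> cquot" where
  "qscale c p = ((\<lambda>t. c * fst p t), snd p)"

definition qembed :: "(real \<Rightarrow> real) \<Rightarrow> cquot" where
  "qembed f = (conv (hk 1) f, hk 1)"

definition qzero :: cquot where
  "qzero = ((\<lambda>t. 0), hk 1)"

definition qS :: "real \<Rightarrow> cquot" where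
  "qS a = (if 0 < a then (hk 1, conv (hk 1) (hk a))
           else if a = 0 then (hk 1, hk 1)
           else qembed (hk (- a)))"

fun qsumn :: "(nat \<Rightarrow> cquot) \<Rightarrow> nat \<Rightarrow> cquot" where
  "qsumn F 0 = qzero"
| "qsumn F (Suc n) = qadd (qsumn F n) (F n)"

end

theory Submission
  imports Defs
begin

text \<open>
  After clearing denominators, the identity in M_{-1} is an identity between Laplace
  convolutions with the power kernels h_a. These obey h_a * h_b = h_{a+b} (Euler's Beta
  integral) and, by Fubini, h_a * (h_b * g) = h_{a+b} * g for g in C_{-1}. For k < m the
  derivative of D^{rho_k} y lies in C_{-1}, so by the fundamental theorem of calculus
  D^{rho_k} y has a limit c_k at 0+ and equals c_k + h_1 * (D^{alpha_k} ... D^{alpha_0} y).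
  Induction on k then gives h_{rho_k + 1} * D^{rho_k} y = h_1 * y - sum_{j<k} c_j h_{rho_j + 2},
  which for k = m is the claimed identity multiplied out.
\<close>

text \<open>The kernel x^(a-1) extended by zero to the whole real line, so that convolutions
  become Lebesgue integrals over the reals and Fubini applies.\<close>
definition rl_kernel :: "real \<Rightarrow> real \<Rightarrow> real" where
  "rl_kernel a x = (if 0 < x then x powr (a - 1) else 0)"

lemma rl_kernel_measurable[measurable]: "rl_kernel a \<in> borel_measurable borel"
  unfolding rl_kernel_def by measurable

lemma rl_kernel_nonneg: "0 \<le> rl_kernel a x"
  by (simp add: rl_kernel_def)

lemma hk_eq_rl_kernel: "0 \<le> x \<Longrightarrow> hk a x = rl_kernel a x / Gamma a"
  by (auto simp: hk_def rl_kernel_def)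

lemma hk_1: "0 < x \<Longrightarrow> hk 1 x = 1"
  by (simp add: hk_def)

lemma has_integral_Beta_powr:
  fixes a b t :: real
  assumes a: "0 < a" and b: "0 < b" and t: "0 < t"
  shows "((\<lambda>s. (t - s) powr (a - 1) * s powr (b - 1)) has_integral (Beta a b * t powr (a + b - 1))) {0..t}"
proof -
  have "((\<lambda>u. u powr (b - 1) * (1 - u) powr (a - 1)) has_integral Beta b a) (cbox 0 1)"
    using has_integral_Beta_real[of b a] a b by simp
  from has_integral_affinity'[OF this, of "1/t" 0] t
  have "((\<lambda>x. (x/t) powr (b - 1) * (1 - x/t) powr (a - 1)) has_integral (t * Beta b a)) {0..t}"
    by (simp add: divide_inverse mult.commute)
  then have scaled: "((\<lambda>x. t powr (a + b - 2) * ((x/t) powr (b - 1) * (1 - x/t) powr (a - 1)))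
      has_integral (t powr (a + b - 2) * (t * Beta b a))) {0..t}"
    by (rule has_integral_mult_right)
  have "t powr (a + b - 1) = t powr (a + b - 2) * t"
    using powr_add[of t "a + b - 2" 1] t by simp
  then have total: "t powr (a + b - 2) * (t * Beta b a) = Beta a b * t powr (a + b - 1)"
    using t by (simp add: Beta_commute)
  have integrand: "t powr (a + b - 2) * ((x/t) powr (b - 1) * (1 - x/t) powr (a - 1))
      = (t - x) powr (a - 1) * x powr (b - 1)" if "x \<in> {0..t}" for x
  proof -
    have x: "0 \<le> x" "x \<le> t" using that by auto
    have "1 - x/t = (t - x)/t" using t by (simp add: field_simps)
    then have "t powr (a + b - 2) * ((x/t) powr (b - 1) * (1 - x/t) powr (a - 1))
       = (t powr (a + b - 2) / (t powr (b - 1) * t powr (a - 1))) * ((t - x) powr (a - 1) * x powr (b - 1))"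
      using x t by (simp add: powr_divide field_simps)
    also have "t powr (b - 1) * t powr (a - 1) = t powr (a + b - 2)"
      by (simp add: powr_add[symmetric] add.commute)
    finally show ?thesis using t by simp
  qed
  show ?thesis
    using scaled total integrand by (metis (no_types, lifting) has_integral_cong)
qed

lemma rl_kernel_convolution:
  fixes a b t :: real
  assumes a: "0 < a" and b: "0 < b"
  shows "integrable lborel (\<lambda>s. rl_kernel a (t - s) * rl_kernel b s)"
    and "(\<integral>s. rl_kernel a (t - s) * rl_kernel b s \<partial>lborel) = Beta a b * rl_kernel (a + b) t"
proof -
  have "has_bochner_integral lborel (\<lambda>s. rl_kernel a (t - s) * rl_kernel b s) (Beta a b * rl_kernel (a + b) t)"
  proof (cases "0 < t")
    case False
    then have "(\<lambda>s. rl_kernel a (t - s) * rl_kernel b s) = (\<lambda>s. 0)"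
      and "rl_kernel (a + b) t = 0"
      by (auto simp: rl_kernel_def fun_eq_iff)
    then show ?thesis by (simp add: has_bochner_integral_zero)
  next
    case t: True
    have "((\<lambda>s. rl_kernel a (t - s) * rl_kernel b s) has_integral (Beta a b * t powr (a + b - 1))) {0..t}"
      by (rule has_integral_cong[THEN iffD1, OF _ has_integral_Beta_powr[OF a b t]])
        (auto simp: rl_kernel_def)
    then have "((\<lambda>s. rl_kernel a (t - s) * rl_kernel b s) has_integral (Beta a b * t powr (a + b - 1))) UNIV"
      by (rule has_integral_on_superset) (auto simp: rl_kernel_def)
    then have "integral\<^sup>N lborel (\<lambda>s. rl_kernel a (t - s) * rl_kernel b s) = ennreal (Beta a b * t powr (a + b - 1))"
      by (rule nn_integral_has_integral_lborel[rotated 2]) (auto simp: rl_kernel_nonneg)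
    moreover have "0 \<le> Beta a b" using a b by (simp add: Beta_def)
    ultimately show ?thesis
      using t by (intro has_bochner_integral_nn_integral) (auto simp: rl_kernel_nonneg rl_kernel_def)
  qed
  then show "integrable lborel (\<lambda>s. rl_kernel a (t - s) * rl_kernel b s)"
    and "(\<integral>s. rl_kernel a (t - s) * rl_kernel b s \<partial>lborel) = Beta a b * rl_kernel (a + b) t"
    by (auto simp: has_bochner_integral_iff)
qed

lemma integral_Icc_eq_lborel:
  fixes H h :: "real \<Rightarrow> real"
  assumes H: "integrable lborel H" and vanish: "\<And>r. r \<notin> {0<..<s} \<Longrightarrow> H r = 0"
    and agree: "\<And>r. 0 < r \<Longrightarrow> r < s \<Longrightarrow> h r = H r"
  shows "h integrable_on {0..s}" "integral {0..s} h = (\<integral>r. H r \<partial>lborel)"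
proof -
  define I where "I = (\<integral>r. H r \<partial>lborel)"
  have "(H has_integral I) UNIV"
    unfolding I_def by (rule has_integral_integral_lborel[OF H])
  also have "H = (\<lambda>x. if x \<in> {0..s} then H x else 0)"
    using vanish by (auto simp: fun_eq_iff)
  finally have "(H has_integral I) {0..s}"
    by (simp only: has_integral_restrict_UNIV)
  then have "(h has_integral I) {0..s}"
    by (rule has_integral_spike[where S="{0,s}", rotated 2]) (auto intro: agree)
  then show "h integrable_on {0..s}" "integral {0..s} h = (\<integral>r. H r \<partial>lborel)"
    by (auto simp: integral_unique has_integral_integrable I_def)
qed

definition Cgam_part :: "real \<Rightarrow> (real \<Rightarrow> real) \<Rightarrow> real \<Rightarrow> real" where
  "Cgam_part p g1 r = (if 0 < r then r powr p * g1 r else 0)"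

lemma Cgam_part_measurable:
  assumes "continuous_on {0..} g1"
  shows "Cgam_part p g1 \<in> borel_measurable borel"
proof -
  have "continuous_on {0<..} (\<lambda>r::real. r powr p * g1 r)"
    using continuous_on_subset[OF assms] by (intro continuous_intros) (auto simp: subset_eq)
  then have "(\<lambda>x. indicator {0<..} x *\<^sub>R (x powr p * g1 x)) \<in> borel_measurable borel"
    by (intro borel_measurable_continuous_on_indicator) auto
  also have "(\<lambda>x. indicator {0<..} x *\<^sub>R (x powr p * g1 x)) = Cgam_part p g1"
    by (auto simp: fun_eq_iff Cgam_part_def indicator_def)
  finally show ?thesis .
qed

lemma Cgam_part_bound:
  assumes "continuous_on {0..} g1"
  obtains C where "0 \<le> C" "\<And>r. r \<le> T \<Longrightarrow> \<bar>Cgam_part p g1 r\<bar> \<le> C * rl_kernel (p + 1) r"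
proof -
  have "bounded (g1 ` {0..T})"
    by (intro compact_imp_bounded compact_continuous_image continuous_on_subset[OF assms]) auto
  then obtain B where B: "B > 0" "\<And>x. x \<in> {0..T} \<Longrightarrow> \<bar>g1 x\<bar> \<le> B"
    unfolding bounded_pos by auto
  have "\<bar>Cgam_part p g1 r\<bar> \<le> B * rl_kernel (p + 1) r" if "r \<le> T" for r
  proof (cases "0 < r")
    case True
    have "\<bar>r powr p * g1 r\<bar> = r powr p * \<bar>g1 r\<bar>" by (simp add: abs_mult)
    also have "\<dots> \<le> r powr p * B" using B True that by (intro mult_left_mono) auto
    finally show ?thesis using True by (simp add: Cgam_part_def rl_kernel_def mult.commute)
  qed (simp add: Cgam_part_def rl_kernel_def)
  with B show thesis by (intro that[of B]) auto
qed

lemma rl_kernel_convolution_dominated: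
  fixes G :: "real \<Rightarrow> real"
  assumes G: "G \<in> borel_measurable borel" and C: "0 \<le> C"
    and bound: "\<And>r. r \<le> T \<Longrightarrow> \<bar>G r\<bar> \<le> C * rl_kernel q r"
    and q: "0 < q" and b: "0 < b" and s: "s \<le> T"
  shows "integrable lborel (\<lambda>r. rl_kernel b (s - r) * G r)"
    and "(\<integral>r. \<bar>rl_kernel b (s - r) * G r\<bar> \<partial>lborel) \<le> C * (Beta b q * rl_kernel (b + q) s)"
proof -
  have dom_int: "integrable lborel (\<lambda>r. C * (rl_kernel b (s - r) * rl_kernel q r))"
    using rl_kernel_convolution(1)[OF b q, of s] by simp
  have dom: "\<bar>rl_kernel b (s - r) * G r\<bar> \<le> C * (rl_kernel b (s - r) * rl_kernel q r)" for r
  proof (cases "r < s")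
    case True
    have "\<bar>rl_kernel b (s - r) * G r\<bar> = rl_kernel b (s - r) * \<bar>G r\<bar>"
      by (simp add: abs_mult rl_kernel_nonneg)
    also have "\<dots> \<le> rl_kernel b (s - r) * (C * rl_kernel q r)"
      using bound[of r] True s by (intro mult_left_mono) (auto simp: rl_kernel_nonneg)
    finally show ?thesis by (simp add: mult_ac)
  qed (simp add: rl_kernel_def)
  show int: "integrable lborel (\<lambda>r. rl_kernel b (s - r) * G r)"
    by (rule Bochner_Integration.integrable_bound[OF dom_int])
      (use G dom C in \<open>auto simp: rl_kernel_nonneg\<close>)
  have "(\<integral>r. \<bar>rl_kernel b (s - r) * G r\<bar> \<partial>lborel) \<le> (\<integral>r. C * (rl_kernel b (s - r) * rl_kernel q r) \<partial>lborel)"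
    by (intro integral_mono integrable_abs int dom_int dom)
  also have "\<dots> = C * (Beta b q * rl_kernel (b + q) s)"
    using rl_kernel_convolution(2)[OF b q, of s] by simp
  finally show "(\<integral>r. \<bar>rl_kernel b (s - r) * G r\<bar> \<partial>lborel) \<le> C * (Beta b q * rl_kernel (b + q) s)" .
qed

lemma conv_hk_eq_lborel:
  assumes p: "p > -1" and g1: "continuous_on {0..} g1" and g: "\<And>t. t > 0 \<Longrightarrow> g t = t powr p * g1 t"
    and a: "0 < a" and t: "0 < t"
  shows "integrable lborel (\<lambda>r. rl_kernel a (t - r) * Cgam_part p g1 r)"
    and "(\<lambda>r. hk a (t - r) * g r) integrable_on {0..t}"
    and "conv (hk a) g t = (\<integral>r. rl_kernel a (t - r) * Cgam_part p g1 r \<partial>lborel) / Gamma a"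
proof -
  obtain C where C: "C \<ge> 0" "\<And>r. r \<le> t \<Longrightarrow> \<bar>Cgam_part p g1 r\<bar> \<le> C * rl_kernel (p + 1) r"
    using Cgam_part_bound[OF g1] by metis
  show int: "integrable lborel (\<lambda>r. rl_kernel a (t - r) * Cgam_part p g1 r)"
    using rl_kernel_convolution_dominated(1)[OF Cgam_part_measurable[OF g1] C _ a order_refl] p by simp
  have "integrable lborel (\<lambda>r. rl_kernel a (t - r) * Cgam_part p g1 r / Gamma a)"
    using int by simp
  note Icc = integral_Icc_eq_lborel[OF this, of t "\<lambda>r. hk a (t - r) * g r"]
  have "\<And>r. r \<notin> {0<..<t} \<Longrightarrow> rl_kernel a (t - r) * Cgam_part p g1 r / Gamma a = 0"
    and "\<And>r. 0 < r \<Longrightarrow> r < t \<Longrightarrow> hk a (t - r) * g r = rl_kernel a (t - r) * Cgam_part p g1 r / Gamma a"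
    by (auto simp: rl_kernel_def Cgam_part_def hk_eq_rl_kernel g)
  note Icc = Icc[OF this]
  show "(\<lambda>r. hk a (t - r) * g r) integrable_on {0..t}"
    by (rule Icc(1))
  show "conv (hk a) g t = (\<integral>r. rl_kernel a (t - r) * Cgam_part p g1 r \<partial>lborel) / Gamma a"
    using Icc(2) by (simp add: conv_def)
qed

lemma rl_kernel_double_convolution_integrable:
  fixes G :: "real \<Rightarrow> real"
  assumes G: "G \<in> borel_measurable borel" and C: "0 \<le> C"
    and bound: "\<And>r. r \<le> t \<Longrightarrow> \<bar>G r\<bar> \<le> C * rl_kernel q r"
    and q: "0 < q" and a: "0 < a" and b: "0 < b"
  shows "integrable (lborel \<Otimes>\<^sub>M lborel) (\<lambda>(s, r). rl_kernel a (t - s) * (rl_kernel b (s - r) * G r))"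
proof -
  define \<Phi> where "\<Phi> s r = rl_kernel a (t - s) * (rl_kernel b (s - r) * G r)" for s r
  have \<Phi>_measurable: "(\<lambda>(s, r). \<Phi> s r) \<in> borel_measurable (lborel \<Otimes>\<^sub>M lborel)"
    using G unfolding \<Phi>_def case_prod_beta' by measurable
  have section_int: "integrable lborel (\<Phi> s)" for s
  proof (cases "s \<le> t")
    case True
    then show ?thesis unfolding \<Phi>_def
      using rl_kernel_convolution_dominated(1)[OF G C bound q b True] by simp
  next
    case False
    then have "\<Phi> s = (\<lambda>r. 0)" by (auto simp: \<Phi>_def rl_kernel_def fun_eq_iff)
    then show ?thesis by simp
  qed
  define D where "D s = C * Beta b q * (rl_kernel a (t - s) * rl_kernel (b + q) s)" for s
  have section_bound: "(\<integral>r. norm (\<Phi> s r) \<partial>lborel) \<le> D s" for s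
  proof (cases "s \<le> t")
    case True
    have "(\<integral>r. norm (\<Phi> s r) \<partial>lborel) = rl_kernel a (t - s) * (\<integral>r. \<bar>rl_kernel b (s - r) * G r\<bar> \<partial>lborel)"
      unfolding \<Phi>_def by (simp add: abs_mult rl_kernel_nonneg)
    also have "\<dots> \<le> rl_kernel a (t - s) * (C * (Beta b q * rl_kernel (b + q) s))"
      by (intro mult_left_mono rl_kernel_convolution_dominated(2)[OF G C bound q b True] rl_kernel_nonneg)
    finally show ?thesis by (simp add: D_def mult_ac)
  next
    case False
    then show ?thesis by (simp add: \<Phi>_def D_def rl_kernel_def)
  qed
  have "0 \<le> Beta b q" using b q by (simp add: Beta_def)
  then have D_nonneg: "0 \<le> D s" for s
    using C by (simp add: D_def rl_kernel_nonneg)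
  have "integrable lborel (\<lambda>s. \<integral>r. norm (\<Phi> s r) \<partial>lborel)"
  proof (rule Bochner_Integration.integrable_bound)
    show "integrable lborel D"
      unfolding D_def[abs_def]
      by (intro integrable_mult_right rl_kernel_convolution(1)[OF a]) (use b q in simp)
    show "(\<lambda>s. \<integral>r. norm (\<Phi> s r) \<partial>lborel) \<in> borel_measurable lborel"
      using G unfolding \<Phi>_def by measurable
    show "AE s in lborel. norm (\<integral>r. norm (\<Phi> s r) \<partial>lborel) \<le> norm (D s)"
      using section_bound D_nonneg by (intro AE_I2) (simp add: integral_nonneg_AE)
  qed
  then show ?thesis
    unfolding \<Phi>_def[symmetric]
    by (intro lborel_pair.Fubini_integrable[OF \<Phi>_measurable]) (use section_int in auto)
qed

lemma rl_kernel_double_convolution: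
  fixes G :: "real \<Rightarrow> real"
  assumes G: "G \<in> borel_measurable borel" and C: "0 \<le> C"
    and bound: "\<And>r. r \<le> t \<Longrightarrow> \<bar>G r\<bar> \<le> C * rl_kernel q r"
    and q: "0 < q" and a: "0 < a" and b: "0 < b"
  shows "integrable lborel (\<lambda>s. rl_kernel a (t - s) * (\<integral>r. rl_kernel b (s - r) * G r \<partial>lborel))"
    and "(\<integral>s. rl_kernel a (t - s) * (\<integral>r. rl_kernel b (s - r) * G r \<partial>lborel) \<partial>lborel)
      = Beta a b * (\<integral>r. rl_kernel (a + b) (t - r) * G r \<partial>lborel)"
proof -
  note int = rl_kernel_double_convolution_integrable[where t=t, OF assms]
  have inner: "(\<integral>r. rl_kernel a (t - s) * (rl_kernel b (s - r) * G r) \<partial>lborel)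
      = rl_kernel a (t - s) * (\<integral>r. rl_kernel b (s - r) * G r \<partial>lborel)" for s
    by simp
  show "integrable lborel (\<lambda>s. rl_kernel a (t - s) * (\<integral>r. rl_kernel b (s - r) * G r \<partial>lborel))"
    using lborel_pair.integrable_fst[OF int] by (simp add: inner)
  have outer: "(\<integral>s. rl_kernel a (t - s) * (rl_kernel b (s - r) * G r) \<partial>lborel)
      = Beta a b * (rl_kernel (a + b) (t - r) * G r)" for r
  proof -
    have "(\<integral>s. rl_kernel a (t - s) * rl_kernel b (s - r) \<partial>lborel)
        = (\<integral>u. rl_kernel a (t - (r + 1 * u)) * rl_kernel b (r + 1 * u - r) \<partial>lborel)"
      using lborel_integral_real_affine[of 1 "\<lambda>s. rl_kernel a (t - s) * rl_kernel b (s - r)" r] by simp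
    also have "\<dots> = (\<integral>u. rl_kernel a ((t - r) - u) * rl_kernel b u \<partial>lborel)"
      by (simp add: algebra_simps)
    also have "\<dots> = Beta a b * rl_kernel (a + b) (t - r)"
      by (rule rl_kernel_convolution(2)[OF a b])
    finally show ?thesis by (simp add: mult_ac)
  qed
  have "(\<integral>s. rl_kernel a (t - s) * (\<integral>r. rl_kernel b (s - r) * G r \<partial>lborel) \<partial>lborel)
      = (\<integral>r. Beta a b * (rl_kernel (a + b) (t - r) * G r) \<partial>lborel)"
    using lborel_pair.Fubini_integral[OF int] by (simp add: inner outer)
  then show "(\<integral>s. rl_kernel a (t - s) * (\<integral>r. rl_kernel b (s - r) * G r \<partial>lborel) \<partial>lborel)
      = Beta a b * (\<integral>r. rl_kernel (a + b) (t - r) * G r \<partial>lborel)"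
    by simp
qed

lemma Gamma_ne_zero_sum:
  fixes a b :: real
  assumes "0 < a" "0 < b"
  shows "Gamma a \<noteq> 0" "Gamma b \<noteq> 0" "Gamma (a + b) \<noteq> 0"
  using assms Gamma_real_pos by (metis add_pos_pos order_less_irrefl)+

lemma conv_hk_conv_hk_powr:
  assumes p: "p > -1" and g1: "continuous_on {0..} g1" and g: "\<And>t. t > 0 \<Longrightarrow> g t = t powr p * g1 t"
    and a: "0 < a" and b: "0 < b" and t: "0 < t"
  shows "(\<lambda>s. hk a (t - s) * conv (hk b) g s) integrable_on {0..t}"
    and "conv (hk a) (conv (hk b) g) t = conv (hk (a + b)) g t"
proof -
  define G where "G = Cgam_part p g1"
  have G_measurable: "G \<in> borel_measurable borel"
    unfolding G_def by (rule Cgam_part_measurable[OF g1])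
  obtain C where C: "C \<ge> 0" "\<And>r. r \<le> t \<Longrightarrow> \<bar>G r\<bar> \<le> C * rl_kernel (p + 1) r"
    using Cgam_part_bound[OF g1] unfolding G_def by metis
  have q: "0 < p + 1" using p by simp
  note double = rl_kernel_double_convolution[where t=t, OF G_measurable C q a b]
  define L where "L s = (\<integral>r. rl_kernel b (s - r) * G r \<partial>lborel)" for s
  have L_vanish: "L s = 0" if "s \<le> 0" for s
  proof -
    have "(\<lambda>r. rl_kernel b (s - r) * G r) = (\<lambda>r. 0)"
      using that by (auto simp: fun_eq_iff rl_kernel_def G_def Cgam_part_def)
    then show ?thesis by (simp add: L_def)
  qed
  have "integrable lborel (\<lambda>s. rl_kernel a (t - s) * L s / (Gamma a * Gamma b))"
    using double(1) by (simp add: L_def)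
  note Icc = integral_Icc_eq_lborel[OF this, of t "\<lambda>s. hk a (t - s) * conv (hk b) g s"]
  have "\<And>s. s \<notin> {0<..<t} \<Longrightarrow> rl_kernel a (t - s) * L s / (Gamma a * Gamma b) = 0"
    and "\<And>s. 0 < s \<Longrightarrow> s < t \<Longrightarrow>
      hk a (t - s) * conv (hk b) g s = rl_kernel a (t - s) * L s / (Gamma a * Gamma b)"
    using L_vanish conv_hk_eq_lborel(3)[OF p g1 g b]
    by (auto simp: rl_kernel_def hk_eq_rl_kernel L_def G_def)
  note Icc = Icc[OF this]
  show "(\<lambda>s. hk a (t - s) * conv (hk b) g s) integrable_on {0..t}"
    by (rule Icc(1))
  have "conv (hk a) (conv (hk b) g) t = (\<integral>s. rl_kernel a (t - s) * L s \<partial>lborel) / (Gamma a * Gamma b)"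
    using Icc(2) by (simp add: conv_def)
  also have "\<dots> = Beta a b * (\<integral>r. rl_kernel (a + b) (t - r) * G r \<partial>lborel) / (Gamma a * Gamma b)"
    using double(2) by (simp add: L_def)
  also have "\<dots> = (\<integral>r. rl_kernel (a + b) (t - r) * G r \<partial>lborel) / Gamma (a + b)"
    using Gamma_ne_zero_sum[OF a b] by (simp add: Beta_def)
  also have "\<dots> = conv (hk (a + b)) g t"
    using conv_hk_eq_lborel(3)[OF p g1 g _ t, of "a + b"] a b by (simp add: G_def)
  finally show "conv (hk a) (conv (hk b) g) t = conv (hk (a + b)) g t" .
qed

lemma Cgam_neg1E:
  assumes "g \<in> Cgam (-1)"
  obtains p g1 where "p > -1" "continuous_on {0..} g1" "\<And>t. t > 0 \<Longrightarrow> g t = t powr p * g1 t"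
  using assms unfolding Cgam_def by auto

lemma conv_hk_integrable:
  assumes "g \<in> Cgam (-1)" "0 < a" "0 < t"
  shows "(\<lambda>r. hk a (t - r) * g r) integrable_on {0..t}"
  using assms(1) by (rule Cgam_neg1E) (use conv_hk_eq_lborel(2) assms in blast)

lemma conv_hk_conv_hk:
  assumes "g \<in> Cgam (-1)" "0 < a" "0 < b" "0 < t"
  shows "(\<lambda>s. hk a (t - s) * conv (hk b) g s) integrable_on {0..t}"
    and "conv (hk a) (conv (hk b) g) t = conv (hk (a + b)) g t"
  using assms(1) by (rule Cgam_neg1E; use conv_hk_conv_hk_powr assms in blast)+

lemma hk_in_Cgam: "0 < b \<Longrightarrow> hk b \<in> Cgam (-1)"
  unfolding Cgam_def
  by (intro CollectI exI[of _ "b - 1"] conjI exI[of _ "\<lambda>_. 1 / Gamma b"]) (auto simp: hk_def)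

lemma conv_hk_hk:
  assumes a: "0 < a" and b: "0 < b" and t: "0 < t"
  shows "conv (hk a) (hk b) t = hk (a + b) t"
proof -
  have part: "Cgam_part (b - 1) (\<lambda>_. 1 / Gamma b) r = rl_kernel b r / Gamma b" for r
    by (simp add: Cgam_part_def rl_kernel_def)
  have "conv (hk a) (hk b) t = (\<integral>r. rl_kernel a (t - r) * rl_kernel b r / Gamma b \<partial>lborel) / Gamma a"
    using conv_hk_eq_lborel(3)[of "b - 1" "\<lambda>_. 1 / Gamma b", OF _ _ _ a t] b
    by (simp add: part hk_def)
  also have "\<dots> = Beta a b * rl_kernel (a + b) t / (Gamma a * Gamma b)"
    using rl_kernel_convolution(2)[OF a b, of t] by simp
  also have "\<dots> = hk (a + b) t"
    using Gamma_ne_zero_sum[OF a b] t by (simp add: Beta_def hk_eq_rl_kernel)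
  finally show ?thesis .
qed

lemma has_integral_reflect_Icc:
  fixes F :: "real \<Rightarrow> real"
  assumes "(F has_integral i) {0..t}"
  shows "((\<lambda>s. F (t - s)) has_integral i) {0..t}"
proof -
  have "((\<lambda>x. F (1 *\<^sub>R x + t)) has_integral (i /\<^sub>R 1 ^ DIM(real))) (cbox ((0 - t) /\<^sub>R 1) ((t - t) /\<^sub>R 1))"
    by (rule has_integral_affinity') (use assms in auto)
  then have "((\<lambda>x. F (t + x)) has_integral i) {-t..0}"
    by (simp add: add.commute)
  from has_integral_reflect_real[of "\<lambda>x. F (t + x)" i 0 "-t", THEN iffD2, OF this]
  show ?thesis by simp
qed

lemma integral_reflect_Icc:
  fixes F :: "real \<Rightarrow> real"
  shows "integral {0..t} (\<lambda>s. F (t - s)) = integral {0..t} F"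
proof (cases "F integrable_on {0..t}")
  case True
  then show ?thesis
    using has_integral_reflect_Icc[OF integrable_integral[OF True]] by (simp add: integral_unique)
next
  case False
  have "\<not> (\<lambda>s. F (t - s)) integrable_on {0..t}"
    using has_integral_reflect_Icc[OF integrable_integral, of "\<lambda>s. F (t - s)" t] False by auto
  then show ?thesis
    using False by (simp add: not_integrable_integral)
qed

lemma conv_commute: "conv f g t = conv g f t"
  unfolding conv_def
  using integral_reflect_Icc[where F="\<lambda>s. g (t - s) * f s" and t=t] by (simp add: mult.commute)

lemma conv_cong:
  assumes "\<And>x. 0 < x \<Longrightarrow> f x = f' x" and "\<And>x. 0 < x \<Longrightarrow> g x = g' x"
  shows "conv f g t = conv f' g' t"
  unfolding conv_def by (rule integral_spike[where S="{0,t}"]) (auto simp: assms)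

lemma conv_mult_right: "conv f (\<lambda>x. c * g x) t = c * conv f g t"
  unfolding conv_def by (simp add: mult_ac)

lemma RLint_eq_conv_hk: "0 < a \<Longrightarrow> RLint a g = conv (hk a) g"
  unfolding RLint_def conv_def hk_def fun_eq_iff
  by (simp add: integral_mult_right[symmetric] mult_ac)

lemma conv_hk_1_eq_integral: "0 < t \<Longrightarrow> conv (hk 1) g t = integral {0..t} g"
  unfolding conv_def by (rule integral_spike[where S="{t}"]) (auto simp: hk_1)

lemma eq_const_plus_integral_deriv:
  fixes f :: "real \<Rightarrow> real"
  assumes diff: "\<forall>t>0. f differentiable (at t)" and int: "\<And>t. 0 < t \<Longrightarrow> deriv f integrable_on {0..t}"
  shows "\<exists>c. \<forall>t>0. f t = c + integral {0..t} (deriv f)"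
proof -
  have step: "f t - integral {0..t} (deriv f) = f s - integral {0..s} (deriv f)" if "0 < s" "s \<le> t" for s t
  proof -
    have "(deriv f has_integral (f t - f s)) {s..t}"
    proof (rule fundamental_theorem_of_calculus[OF that(2)])
      fix x assume "x \<in> {s..t}"
      then have "(f has_real_derivative deriv f x) (at x)"
        using diff that by (simp add: DERIV_deriv_iff_real_differentiable)
      then show "(f has_vector_derivative deriv f x) (at x within {s..t})"
        by (simp add: has_real_derivative_iff_has_vector_derivative has_vector_derivative_at_within)
    qed
    moreover have "integral {0..t} (deriv f) = integral {0..s} (deriv f) + integral {s..t} (deriv f)"
      using int[of t] that by (intro Henstock_Kurzweil_Integration.integral_combine[symmetric]) auto
    ultimately show ?thesis by (simp add: integral_unique)
  qed
  define c where "c = f 1 - integral {0..1} (deriv f)"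
  have "f t = c + integral {0..t} (deriv f)" if "0 < t" for t
  proof (cases "t \<le> 1")
    case True
    then show ?thesis using step[OF that True] by (simp add: c_def)
  next
    case False
    then show ?thesis using step[of 1 t] by (simp add: c_def)
  qed
  then show ?thesis by blast
qed

text \<open>The limit exists because h_1 * f' is an indefinite integral, hence vanishes at 0+.\<close>
lemma tendsto_at_right_0_and_eq_plus_conv_hk_1_deriv:
  fixes f :: "real \<Rightarrow> real"
  assumes diff: "\<forall>t>0. f differentiable (at t)" and deriv: "deriv f \<in> Cgam (-1)"
  obtains c where "(f \<longlongrightarrow> c) (at_right 0)" "\<forall>t>0. f t = c + conv (hk 1) (deriv f) t"
proof -
  have int: "deriv f integrable_on {0..t}" if "0 < t" for t
    by (rule integrable_spike[OF conv_hk_integrable[OF deriv zero_less_one that], where S="{t}"])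
      (auto simp: hk_1)
  obtain c where c: "\<forall>t>0. f t = c + integral {0..t} (deriv f)"
    using eq_const_plus_integral_deriv[OF diff int] by blast
  have "((\<lambda>t. integral {0..t} (deriv f)) \<longlongrightarrow> integral {0..0} (deriv f)) (at_right 0)"
    by (rule continuous_on_Icc_at_rightD) (use indefinite_integral_continuous_1[OF int[of 1]] in auto)
  then have "((\<lambda>t. c + integral {0..t} (deriv f)) \<longlongrightarrow> c + 0) (at_right 0)"
    by (intro tendsto_intros) simp
  moreover have "\<forall>\<^sub>F t in at_right 0. c + integral {0..t} (deriv f) = f t"
    using eventually_at_right_less[of "0::real"] by eventually_elim (use c in auto)
  ultimately have "(f \<longlongrightarrow> c) (at_right 0)"
    using tendsto_cong by force
  moreover have "\<forall>t>0. f t = c + conv (hk 1) (deriv f) t"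
    using c by (simp add: conv_hk_1_eq_integral)
  ultimately show thesis by (rule that)
qed

lemma conv_hk_sum_hk:
  fixes n :: nat
  assumes a: "0 < a" and t: "0 < t" and e: "\<And>k. k < n \<Longrightarrow> 0 < e k"
  shows "(\<lambda>s. hk a (t - s) * (\<Sum>k<n. c k * hk (e k) s)) integrable_on {0..t}"
    and "conv (hk a) (\<lambda>x. \<Sum>k<n. c k * hk (e k) x) t = (\<Sum>k<n. c k * hk (a + e k) t)"
proof -
  have int: "(\<lambda>s. c k * (hk a (t - s) * hk (e k) s)) integrable_on {0..t}" if "k < n" for k
    using conv_hk_integrable[OF hk_in_Cgam[OF e[OF that]] a t] by (rule integrable_on_mult_right)
  have distrib: "(\<lambda>s. hk a (t - s) * (\<Sum>k<n. c k * hk (e k) s))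
      = (\<lambda>s. \<Sum>k<n. c k * (hk a (t - s) * hk (e k) s))"
    by (simp add: sum_distrib_left mult_ac)
  show "(\<lambda>s. hk a (t - s) * (\<Sum>k<n. c k * hk (e k) s)) integrable_on {0..t}"
    unfolding distrib by (intro integrable_sum) (use int in auto)
  have "conv (hk a) (\<lambda>x. \<Sum>k<n. c k * hk (e k) x) t
      = (\<Sum>k<n. integral {0..t} (\<lambda>s. c k * (hk a (t - s) * hk (e k) s)))"
    unfolding conv_def distrib by (intro integral_sum) (use int in auto)
  also have "\<dots> = (\<Sum>k<n. c k * hk (a + e k) t)"
    using conv_hk_hk[OF a e t] by (intro sum.cong) (auto simp: conv_def)
  finally show "conv (hk a) (\<lambda>x. \<Sum>k<n. c k * hk (e k) x) t = (\<Sum>k<n. c k * hk (a + e k) t)" .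
qed

lemma conv_hk_diff_sum_hk:
  fixes n :: nat
  assumes a: "0 < a" and t: "0 < t" and e: "\<And>k. k < n \<Longrightarrow> 0 < e k"
    and f: "(\<lambda>s. hk a (t - s) * f s) integrable_on {0..t}"
  shows "conv (hk a) (\<lambda>x. f x - (\<Sum>k<n. c k * hk (e k) x)) t
    = conv (hk a) f t - (\<Sum>k<n. c k * hk (a + e k) t)"
proof -
  have "conv (hk a) (\<lambda>x. f x - (\<Sum>k<n. c k * hk (e k) x)) t
      = conv (hk a) f t - conv (hk a) (\<lambda>x. \<Sum>k<n. c k * hk (e k) x) t"
    unfolding conv_def right_diff_distrib by (rule integral_diff[OF f conv_hk_sum_hk(1)[OF a t e]])
  then show ?thesis
    using conv_hk_sum_hk(2)[OF a t e] by simp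
qed

lemma conv_hk_diff_const:
  assumes "0 < a" "0 < t" "(\<lambda>s. hk a (t - s) * f s) integrable_on {0..t}"
  shows "conv (hk a) (\<lambda>x. f x - c) t = conv (hk a) f t - c * hk (a + 1) t"
proof -
  have "conv (hk a) (\<lambda>x. f x - c) t = conv (hk a) (\<lambda>x. f x - (\<Sum>k<Suc 0. c * hk 1 x)) t"
    by (rule conv_cong) (auto simp: hk_1)
  then show ?thesis
    using conv_hk_diff_sum_hk[of a t "Suc 0" "\<lambda>_. 1" f "\<lambda>_. c"] assms by simp
qed

text \<open>On (0, inf), qS a is represented by the pair (h_num, h_den) with num = qS_num_exp a and
  den = qS_den_exp a, both at least 1 and with den - num = a.\<close>
definition qS_num_exp :: "real \<Rightarrow> real" where
  "qS_num_exp a = (if a < 0 then 1 - a else 1)"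

definition qS_den_exp :: "real \<Rightarrow> real" where
  "qS_den_exp a = (if 0 < a then 1 + a else 1)"

lemma qS_exp_simps: "qS_den_exp a - a = qS_num_exp a" "1 \<le> qS_den_exp a" "1 \<le> qS_num_exp a"
  by (auto simp: qS_den_exp_def qS_num_exp_def)

lemma fst_qS: "0 < x \<Longrightarrow> fst (qS a) x = hk (qS_num_exp a) x"
  by (auto simp: qS_def qembed_def qS_num_exp_def conv_hk_hk)

lemma snd_qS: "0 < x \<Longrightarrow> snd (qS a) x = hk (qS_den_exp a) x"
  by (auto simp: qS_def qembed_def qS_den_exp_def conv_hk_hk)

definition qsumn_den_exp :: "(nat \<Rightarrow> real) \<Rightarrow> nat \<Rightarrow> real" where
  "qsumn_den_exp a n = 1 + (\<Sum>j<n. qS_den_exp (a j))"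

lemma qsumn_den_exp_pos:
  shows "0 < qsumn_den_exp a n"
    and "k < n \<Longrightarrow> 0 < qsumn_den_exp a n - a k"
proof -
  have nonneg: "0 \<le> qS_den_exp (a j)" for j
    using qS_exp_simps(2) by (rule order_trans[OF zero_le_one])
  then show "0 < qsumn_den_exp a n"
    unfolding qsumn_den_exp_def by (simp add: sum_nonneg add_pos_nonneg)
  assume "k < n"
  then have "qS_den_exp (a k) \<le> (\<Sum>j<n. qS_den_exp (a j))"
    by (intro member_le_sum nonneg) auto
  then show "0 < qsumn_den_exp a n - a k"
    using qS_exp_simps[of "a k"] unfolding qsumn_den_exp_def by linarith
qed

lemma qsumn_qscale_qS:
  assumes "0 < x"
  shows "snd (qsumn (\<lambda>k. qscale (c k) (qS (a k))) n) x = hk (qsumn_den_exp a n) x"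
    and "fst (qsumn (\<lambda>k. qscale (c k) (qS (a k))) n) x = (\<Sum>k<n. c k * hk (qsumn_den_exp a n - a k) x)"
  using assms
proof (induction n arbitrary: x)
  case 0
  { case 1 then show ?case by (simp add: qzero_def qsumn_den_exp_def) }
  { case 2 then show ?case by (simp add: qzero_def) }
next
  case (Suc n)
  let ?Q = "qsumn (\<lambda>k. qscale (c k) (qS (a k))) n"
  let ?E = "qsumn_den_exp a n"
  have E_Suc: "qsumn_den_exp a (Suc n) = ?E + qS_den_exp (a n)"
    by (simp add: qsumn_den_exp_def)
  have exp_pos: "0 < qS_den_exp (a n)" "0 < qS_num_exp (a n)"
    using qS_exp_simps[of "a n"] by auto
  note E_pos = qsumn_den_exp_pos[where a=a and n=n]
  {
    case 1
    have "snd (qsumn (\<lambda>k. qscale (c k) (qS (a k))) (Suc n)) x = conv (snd ?Q) (snd (qS (a n))) x"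
      by (simp add: qadd_def qscale_def)
    also have "\<dots> = conv (hk ?E) (hk (qS_den_exp (a n))) x"
      by (rule conv_cong) (use Suc.IH snd_qS in auto)
    also have "\<dots> = hk (qsumn_den_exp a (Suc n)) x"
      using conv_hk_hk[OF E_pos(1) exp_pos(1) 1] E_Suc by simp
    finally show ?case .
  next
    case 2
    have "fst (qsumn (\<lambda>k. qscale (c k) (qS (a k))) (Suc n)) x
        = conv (fst ?Q) (snd (qS (a n))) x + conv (snd ?Q) (\<lambda>t. c n * fst (qS (a n)) t) x"
      by (simp add: qadd_def qscale_def)
    also have "conv (fst ?Q) (snd (qS (a n))) x
        = conv (hk (qS_den_exp (a n))) (\<lambda>x. \<Sum>k<n. c k * hk (?E - a k) x) x"
      by (subst conv_commute, rule conv_cong) (use Suc.IH snd_qS in auto)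
    also have "\<dots> = (\<Sum>k<n. c k * hk (qS_den_exp (a n) + (?E - a k)) x)"
      by (rule conv_hk_sum_hk(2)[OF exp_pos(1) 2]) (use E_pos in auto)
    also have "conv (snd ?Q) (\<lambda>t. c n * fst (qS (a n)) t) x = conv (hk ?E) (\<lambda>t. c n * hk (qS_num_exp (a n)) t) x"
      by (rule conv_cong) (use Suc.IH fst_qS in auto)
    also have "\<dots> = c n * hk (?E + qS_num_exp (a n)) x"
      using conv_hk_hk[OF E_pos(1) exp_pos(2) 2] by (simp add: conv_mult_right)
    finally show ?case
      using E_Suc qS_exp_simps(1)[of "a n"] by (simp add: algebra_simps)
  }
qed

lemma qsub_qmult_qS_qembed_qsumn:
  fixes a c :: "nat \<Rightarrow> real" and \<rho> :: real and y :: "real \<Rightarrow> real" and n :: nat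
  defines "Q \<equiv> qsub (qmult (qS \<rho>) (qembed y)) (qsumn (\<lambda>k. qscale (c k) (qS (a k))) n)"
    and "E \<equiv> qsumn_den_exp a n"
  assumes \<rho>: "0 < \<rho>" and y: "y \<in> Cgam (-1)" and x: "0 < x"
  shows "snd Q x = hk (\<rho> + 2 + E) x"
    and "fst Q x = conv (hk (E + 2)) y x - (\<Sum>k<n. c k * hk (\<rho> + 2 + (E - a k)) x)"
proof -
  let ?S = "qsumn (\<lambda>k. qscale (c k) (qS (a k))) n"
  have E: "0 < E" "\<And>k. k < n \<Longrightarrow> 0 < E - a k"
    unfolding E_def by (rule qsumn_den_exp_pos)+
  have den: "conv (conv (hk 1) (hk \<rho>)) (hk 1) z = hk (\<rho> + 2) z" if "0 < z" for z
  proof -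
    have "conv (conv (hk 1) (hk \<rho>)) (hk 1) z = conv (hk (1 + \<rho>)) (hk 1) z"
      by (rule conv_cong) (use conv_hk_hk \<rho> in auto)
    also have "\<dots> = hk (\<rho> + 2) z"
      using conv_hk_hk[of "1 + \<rho>" 1 z] \<rho> that by (simp add: add_ac)
    finally show ?thesis .
  qed
  have snd_Q: "snd Q x = conv (conv (conv (hk 1) (hk \<rho>)) (hk 1)) (snd ?S) x"
    and fst_Q: "fst Q x = conv (conv (hk 1) (conv (hk 1) y)) (snd ?S) x
        - conv (conv (conv (hk 1) (hk \<rho>)) (hk 1)) (fst ?S) x"
    using \<rho> by (simp_all add: Q_def qsub_def qmult_def qembed_def qS_def)
  have "snd Q x = conv (hk (\<rho> + 2)) (hk E) x"
    unfolding snd_Q by (rule conv_cong) (use den qsumn_qscale_qS(1) in \<open>auto simp: E_def\<close>)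
  also have "\<dots> = hk (\<rho> + 2 + E) x"
    using conv_hk_hk \<rho> E x by simp
  finally show "snd Q x = hk (\<rho> + 2 + E) x" .
  have "conv (conv (hk 1) (conv (hk 1) y)) (snd ?S) x = conv (hk E) (conv (hk 2) y) x"
    by (subst conv_commute, rule conv_cong)
      (use conv_hk_conv_hk(2)[OF y] qsumn_qscale_qS(1) in \<open>auto simp: E_def\<close>)
  also have "\<dots> = conv (hk (E + 2)) y x"
    using conv_hk_conv_hk(2)[OF y E(1) _ x, of 2] by simp
  finally have "conv (conv (hk 1) (conv (hk 1) y)) (snd ?S) x = conv (hk (E + 2)) y x" .
  moreover have "conv (conv (conv (hk 1) (hk \<rho>)) (hk 1)) (fst ?S) x
      = conv (hk (\<rho> + 2)) (\<lambda>z. \<Sum>k<n. c k * hk (E - a k) z) x"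
    by (rule conv_cong) (use den qsumn_qscale_qS(2) in \<open>auto simp: E_def\<close>)
  moreover have "\<dots> = (\<Sum>k<n. c k * hk (\<rho> + 2 + (E - a k)) x)"
    by (rule conv_hk_sum_hk(2)) (use \<rho> x E in auto)
  ultimately show "fst Q x = conv (hk (E + 2)) y x - (\<Sum>k<n. c k * hk (\<rho> + 2 + (E - a k)) x)"
    unfolding fst_Q by simp
qed

text \<open>After cross-multiplying, both sides of the quotient equation become
  h_{E+3} * y - sum_k c_k h_{E+rho+3-a_k}, where h_E is the denominator of the sum.\<close>
lemma qeq_qembed_of_conv_hk_identity:
  fixes a c :: "nat \<Rightarrow> real"
  assumes \<rho>: "0 < \<rho>" and u: "u \<in> Cgam (-1)" and y: "y \<in> Cgam (-1)"
    and exps: "\<And>k. k < n \<Longrightarrow> 0 < \<rho> - a k + 1"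
    and identity: "\<And>t. 0 < t \<Longrightarrow>
      conv (hk (\<rho> + 1)) u t = conv (hk 1) y t - (\<Sum>k<n. c k * hk (\<rho> - a k + 1) t)"
  shows "qeq (qembed u) (qsub (qmult (qS \<rho>) (qembed y)) (qsumn (\<lambda>k. qscale (c k) (qS (a k))) n))"
proof -
  define Q where "Q = qsub (qmult (qS \<rho>) (qembed y)) (qsumn (\<lambda>k. qscale (c k) (qS (a k))) n)"
  define E where "E = qsumn_den_exp a n"
  have E: "0 < E" "\<And>k. k < n \<Longrightarrow> 0 < E - a k"
    unfolding E_def by (rule qsumn_den_exp_pos)+
  have shifted_exps_pos: "0 < \<rho> + 2 + (E - a k)" if "k < n" for k
    using E(2)[OF that] \<rho> by linarith
  note Q_eqs = qsub_qmult_qS_qembed_qsumn[where a=a and c=c and n=n, OF \<rho> y, folded E_def Q_def]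
  have "conv (fst (qembed u)) (snd Q) t = conv (snd (qembed u)) (fst Q) t" if t: "0 < t" for t
  proof -
    have "conv (fst (qembed u)) (snd Q) t = conv (snd Q) (fst (qembed u)) t"
      by (rule conv_commute)
    also have "\<dots> = conv (hk (\<rho> + 2 + E)) (conv (hk 1) u) t"
      by (rule conv_cong[OF Q_eqs(1)]) (simp_all add: qembed_def)
    also have "\<dots> = conv (hk (E + 2)) (conv (hk (\<rho> + 1)) u) t"
      using conv_hk_conv_hk(2)[OF u, of "\<rho> + 2 + E" 1 t] conv_hk_conv_hk(2)[OF u, of "E + 2" "\<rho> + 1" t] \<rho> E t
      by (simp add: add_ac)
    also have "\<dots> = conv (hk (E + 2)) (\<lambda>x. conv (hk 1) y x - (\<Sum>k<n. c k * hk (\<rho> - a k + 1) x)) t"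
      by (rule conv_cong) (simp_all add: identity)
    also have "\<dots> = conv (hk (E + 2)) (conv (hk 1) y) t - (\<Sum>k<n. c k * hk (E + 2 + (\<rho> - a k + 1)) t)"
      by (rule conv_hk_diff_sum_hk) (use E exps t conv_hk_conv_hk(1)[OF y] in auto)
    also have "\<dots> = conv (hk 1) (conv (hk (E + 2)) y) t - (\<Sum>k<n. c k * hk (1 + (\<rho> + 2 + (E - a k))) t)"
      using conv_hk_conv_hk(2)[OF y, of "E + 2" 1 t] conv_hk_conv_hk(2)[OF y, of 1 "E + 2" t] E t
      by (simp add: algebra_simps)
    also have "\<dots> = conv (hk 1) (\<lambda>x. conv (hk (E + 2)) y x - (\<Sum>k<n. c k * hk (\<rho> + 2 + (E - a k)) x)) t"
      by (rule conv_hk_diff_sum_hk[symmetric]) (use E(1) shifted_exps_pos t conv_hk_conv_hk(1)[OF y] in auto)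
    also have "\<dots> = conv (snd (qembed u)) (fst Q) t"
      by (rule conv_cong, simp add: qembed_def, simp only: Q_eqs(2))
    finally show ?thesis .
  qed
  then show ?thesis
    unfolding qeq_def Q_def by blast
qed

lemma Omega_memD:
  assumes "y \<in> Omega al m"
  shows "y \<in> Cgam (-1)"
    and "k \<le> m \<Longrightarrow> DN al k y \<in> Cgam (-1)"
    and "k < m \<Longrightarrow> \<forall>t>0. DN al k y differentiable (at t)"
    and "k < m \<Longrightarrow> Dchain al (Suc k) y \<in> Cgam (-1)"
  using assms by (auto simp: Omega_def)

lemma Dchain_Suc_eq_deriv_DN: "Dchain al (Suc k) y = deriv (DN al k y)"
  by (simp add: DN_def RLder_def[abs_def])

lemma DN_tendsto_Lim:
  assumes y: "y \<in> Omega al m" and k: "k < m"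
  shows "(DN al k y \<longlongrightarrow> Lim (at_right 0) (DN al k y)) (at_right 0)"
    and "0 < t \<Longrightarrow> DN al k y t = Lim (at_right 0) (DN al k y) + conv (hk 1) (Dchain al (Suc k) y) t"
proof -
  obtain c where c: "(DN al k y \<longlongrightarrow> c) (at_right 0)"
    and eq: "\<forall>t>0. DN al k y t = c + conv (hk 1) (deriv (DN al k y)) t"
    using tendsto_at_right_0_and_eq_plus_conv_hk_1_deriv Omega_memD(3,4)[OF y k]
    unfolding Dchain_Suc_eq_deriv_DN by metis
  moreover have "Lim (at_right 0) (DN al k y) = c"
    using c by (intro tendsto_Lim) auto
  ultimately show "(DN al k y \<longlongrightarrow> Lim (at_right 0) (DN al k y)) (at_right 0)"
    and "0 < t \<Longrightarrow> DN al k y t = Lim (at_right 0) (DN al k y) + conv (hk 1) (Dchain al (Suc k) y) t"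
    unfolding Dchain_Suc_eq_deriv_DN by simp_all
qed

lemma rho_0: "rho al 0 = al 0 - 1"
  by (simp add: rho_def)

lemma rho_Suc: "rho al (Suc k) = rho al k + al (Suc k)"
  by (simp add: rho_def)

lemma rho_plus_1_pos:
  assumes al: "\<forall>j\<le>m. 0 < al j \<and> al j \<le> 1" and k: "k \<le> m"
  shows "0 < rho al k + 1"
proof -
  have "al 0 \<le> (\<Sum>j\<le>k. al j)"
    using al k by (intro member_le_sum) (auto intro: less_imp_le)
  then show ?thesis
    using al[rule_format, of 0] by (simp add: rho_def)
qed

lemma conv_hk_RLint:
  assumes g: "g \<in> Cgam (-1)" and a: "0 \<le> a" and b: "0 < b" "b \<le> 1" and t: "0 < t"
  shows "conv (hk (a + b)) (RLint (1 - b) g) t = conv (hk (a + 1)) g t"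
proof (cases "b = 1")
  case True
  then show ?thesis by (simp add: RLint_def[abs_def])
next
  case False
  then have "0 < 1 - b" using b by simp
  then show ?thesis
    using conv_hk_conv_hk(2)[OF g _ _ t, of "a + b" "1 - b"] a b by (simp add: RLint_eq_conv_hk)
qed

text \<open>The step from k to k + 1 substitutes D^{rho_k} y = c_k + h_1 * (D^{alpha_k} ... D^{alpha_0} y).\<close>
lemma conv_hk_DN:
  assumes al: "\<forall>j\<le>m. 0 < al j \<and> al j \<le> 1" and y: "y \<in> Omega al m"
    and "k \<le> m" and "0 < t"
  shows "conv (hk (rho al k + 1)) (DN al k y) t
    = conv (hk 1) y t - (\<Sum>j<k. Lim (at_right 0) (DN al j y) * hk (rho al j + 2) t)"
  using assms(3,4)
proof (induction k arbitrary: t)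
  case 0
  have "conv (hk (rho al 0 + 1)) (DN al 0 y) t = conv (hk (0 + al 0)) (RLint (1 - al 0) y) t"
    by (simp add: rho_0 DN_def)
  also have "\<dots> = conv (hk (0 + 1)) y t"
    by (rule conv_hk_RLint) (use Omega_memD(1)[OF y] al 0 in auto)
  finally show ?case by simp
next
  case (Suc k)
  then have k: "k < m" and t: "0 < t" by simp_all
  define c where "c = Lim (at_right 0) (DN al k y)"
  have a: "0 < rho al k + 1"
    using rho_plus_1_pos[OF al] k by simp
  note D = Omega_memD(4)[OF y k]
  have "conv (hk (rho al (Suc k) + 1)) (DN al (Suc k) y) t
      = conv (hk ((rho al k + 1) + al (Suc k))) (RLint (1 - al (Suc k)) (Dchain al (Suc k) y)) t"
    by (simp add: rho_Suc DN_def add_ac)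
  also have "\<dots> = conv (hk ((rho al k + 1) + 1)) (Dchain al (Suc k) y) t"
    by (rule conv_hk_RLint) (use D a al Suc.prems in auto)
  also have "\<dots> = conv (hk (rho al k + 1)) (conv (hk 1) (Dchain al (Suc k) y)) t"
    using conv_hk_conv_hk(2)[OF D a zero_less_one t] by simp
  also have "\<dots> = conv (hk (rho al k + 1)) (\<lambda>x. DN al k y x - c) t"
    by (rule conv_cong) (simp_all add: DN_tendsto_Lim(2)[OF y k] c_def)
  also have "\<dots> = conv (hk (rho al k + 1)) (DN al k y) t - c * hk (rho al k + 2) t"
    using conv_hk_diff_const[OF a t conv_hk_integrable[OF Omega_memD(2)[OF y] a t]] k
    by (simp add: add_ac)
  also have "\<dots> = conv (hk 1) y t - (\<Sum>j<Suc k. Lim (at_right 0) (DN al j y) * hk (rho al j + 2) t)"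
    using Suc.IH[OF _ t] k by (simp add: c_def)
  finally show ?case .
qed

theorem theorem3p6:
  fixes m :: nat and al :: "nat \<Rightarrow> real" and y :: "real \<Rightarrow> real"
  assumes "1 \<le> m"
    and "\<forall>j\<le>m. 0 < al j \<and> al j \<le> 1"
    and "0 < rho al m" and "rho al m \<le> real m"
    and "y \<in> Omega al m"
  shows "(\<forall>k<m. \<exists>c. (DN al k y \<longlongrightarrow> c) (at_right 0)) \<and>
    qeq (qembed (DN al m y))
        (qsub (qmult (qS (rho al m)) (qembed y))
              (qsumn (\<lambda>k. qscale (Lim (at_right 0) (DN al k y)) (qS (rho al m - rho al k - 1))) m))"
proof -
  note al = assms(2) and \<rho> = assms(3) and y = assms(5)
  have exps: "0 < rho al m - (rho al m - rho al k - 1) + 1" if "k < m" for k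
    using rho_plus_1_pos[OF al, of k] that by simp
  have identity: "conv (hk (rho al m + 1)) (DN al m y) t = conv (hk 1) y t
      - (\<Sum>k<m. Lim (at_right 0) (DN al k y) * hk (rho al m - (rho al m - rho al k - 1) + 1) t)"
    if "0 < t" for t
    using conv_hk_DN[OF al y order_refl that] by (simp add: add_ac)
  show ?thesis
    using DN_tendsto_Lim(1)[OF y]
      qeq_qembed_of_conv_hk_identity[OF \<rho> Omega_memD(2)[OF y order_refl] Omega_memD(1)[OF y] exps identity]
    by blast
qed

end
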